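(* Let $C$ be a set. The weight $w:\mathrm{SList}(C)\to(\mathrm{B}\overline{\mathrm{A}_\infty})^{\mathrm{op}}$ is faithful; that is, two morphisms $f,g:L\to L'$ of symmetric lists are equal if and only if $w(f)=w(g)$ in $\overline{\mathrm{A}_\infty}$.
   Context: $\mathrm{SList}(C)$ is the category presented as follows: objects are finite lists of elements of $C$; morphisms are generated by $\mathrm{sw}_{a,b,l}:a::b::l\to b::a::l$ and, for $f:l\to l'$ and $x\in C$, $x::_mf:x::l\to x::l'$; relations: $x::_m-$ is functorial, $\mathrm{sw}_{a,b,l}$ is natural in $l$, $\mathrm{sw}_{b,a,l}\circ\mathrm{sw}_{a,b,l}=\mathrm{Id}$, and $\mathrm{sw}_{b,c,a::l}\circ(b::_m\mathrm{sw}_{a,c,l})\circ\mathrm{sw}_{a,b,c::l}=(c::_m\mathrm{sw}_{a,b,l})\circ\mathrm{sw}_{a,c,b::l}\circ(a::_m\mathrm{sw}_{b,c,l})$. $\overline{\mathrm{A}_\infty}$ is the Coxeter group with generators $(s_i)_{i\in\mathbb{N}}$, relations $s_i^2=e$, $(s_is_{i+1})^3=e$, $(s_is_j)^2=e$ for $|i-j|>1$; $\mathrm{B}G$ is the one-object category with endomorphisms $G$. The weight $w$ is the functor $\mathrm{SList}(C)\to(\mathrm{B}\overline{\mathrm{A}_\infty})^{\mathrm{op}}$ determined by $w(\mathrm{sw}_{a,b,l})=s_0$ and $w(x::_mf)=\sigma(w(f))$, where $\sigma$ is the shift endomorphism $s_i\mapsto s_{i+1}$ (equivalently, induced from the free-monoid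 labelling $\mathrm{sw}\mapsto 0$, $x::_mf\mapsto 1+(\text{label of }f)$ letterwise). *)

theory Defs
  imports Main
begin

text \<open>Formal expressions built from the generators: identities, swaps
  sw_{a,b,l}, the action x ::_m f, and composition (SComp g f = g \<circ> f).\<close>

datatype 'c smor =
    SId "'c list"
  | SSw 'c 'c "'c list"
  | SCons 'c "'c smor"
  | SComp "'c smor" "'c smor"

inductive styped :: "'c smor \<Rightarrow> 'c list \<Rightarrow> 'c list \<Rightarrow> bool" where
  ty_id: "styped (SId l) l l"
| ty_sw: "styped (SSw a b l) (a # b # l) (b # a # l)"
| ty_cons: "styped f l l' \<Longrightarrow> styped (SCons x f) (x # l) (x # l')"
| ty_comp: "styped f l1 l2 \<Longrightarrow> styped g l2 l3 \<Longrightarrow> styped (SComp g f) l1 l3"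

inductive slist_eq :: "'c smor \<Rightarrow> 'c smor \<Rightarrow> bool" where
  eq_refl: "styped f l l' \<Longrightarrow> slist_eq f f"
| eq_sym: "slist_eq f g \<Longrightarrow> slist_eq g f"
| eq_trans: "slist_eq f g \<Longrightarrow> slist_eq g h \<Longrightarrow> slist_eq f h"
| eq_comp_cong: "slist_eq f f' \<Longrightarrow> slist_eq g g' \<Longrightarrow> styped f l1 l2 \<Longrightarrow> styped g l2 l3
      \<Longrightarrow> slist_eq (SComp g f) (SComp g' f')"
| eq_cons_cong: "slist_eq f f' \<Longrightarrow> slist_eq (SCons x f) (SCons x f')"
| eq_id_left: "styped f l l' \<Longrightarrow> slist_eq (SComp (SId l') f) f"
| eq_id_right: "styped f l l' \<Longrightarrow> slist_eq (SComp f (SId l)) f"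
| eq_assoc: "styped f l1 l2 \<Longrightarrow> styped g l2 l3 \<Longrightarrow> styped h l3 l4
      \<Longrightarrow> slist_eq (SComp h (SComp g f)) (SComp (SComp h g) f)"
| eq_cons_id: "slist_eq (SCons x (SId l)) (SId (x # l))"
| eq_cons_comp: "styped f l1 l2 \<Longrightarrow> styped g l2 l3
      \<Longrightarrow> slist_eq (SCons x (SComp g f)) (SComp (SCons x g) (SCons x f))"
| eq_sw_nat: "styped f l l'
      \<Longrightarrow> slist_eq (SComp (SSw a b l') (SCons a (SCons b f)))
                    (SComp (SCons b (SCons a f)) (SSw a b l))"
| eq_sw_inv: "slist_eq (SComp (SSw b a l) (SSw a b l)) (SId (a # b # l))"
| eq_yb: "slist_eq (SComp (SSw b c (a # l)) (SComp (SCons b (SSw a c l)) (SSw a b (c # l))))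
                   (SComp (SCons c (SSw a b l)) (SComp (SSw a c (b # l)) (SCons a (SSw b c l))))"

text \<open>Elements are words in the generators s_i (i :: nat); since every
  generator is an involution, the group presentation coincides with the monoid
  presentation given by the congruence below.\<close>

inductive cox_eq :: "nat list \<Rightarrow> nat list \<Rightarrow> bool" where
  cox_refl: "cox_eq u u"
| cox_sym: "cox_eq u v \<Longrightarrow> cox_eq v u"
| cox_trans: "cox_eq u v \<Longrightarrow> cox_eq v w \<Longrightarrow> cox_eq u w"
| cox_ctx: "cox_eq u v \<Longrightarrow> cox_eq (p @ u @ q) (p @ v @ q)"
| cox_sq: "cox_eq [i, i] []"
| cox_braid: "cox_eq [i, Suc i, i, Suc i, i, Suc i] []"
| cox_comm: "Suc i < j \<Longrightarrow> cox_eq [i, j, i, j] []"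
| cox_comm': "Suc j < i \<Longrightarrow> cox_eq [i, j, i, j] []"

text \<open>Composition is reversed because the target is the opposite category:
  w(g \<circ> f) = w(f) \<cdot> w(g).  The shift \<sigma> is map Suc.\<close>

fun weight :: "'c smor \<Rightarrow> nat list" where
  "weight (SId l) = []"
| "weight (SSw a b l) = [0]"
| "weight (SCons x f) = map Suc (weight f)"
| "weight (SComp g f) = weight f @ weight g"

end

theory Submission
  imports Defs "HOL-Combinatorics.Transposition"
begin

text \<open>Soundness: every defining relation of SList(C) holds between the weights, naturality
  of sw being the commutation of \<open>s\<^sub>0\<close> with \<open>s\<^sub>j\<close> for \<open>j \<ge> 2\<close> and the
  Yang--Baxter relation the braid relation \<open>s\<^sub>0 s\<^sub>1 s\<^sub>0 = s\<^sub>1 s\<^sub>0 s\<^sub>1\<close>.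

  Faithfulness: letting \<open>s\<^sub>i\<close> act on positions as the transposition of \<open>i\<close> and
  \<open>i + 1\<close>, it suffices to show that a morphism is determined by its source, target and
  position permutation.  By induction on the source \<open>x :: l\<close>, every morphism out of it equals
  \<open>ins \<circ> (x ::\<^sub>m h)\<close>, where \<open>h : l \<rightarrow> m\<close> and \<open>ins\<close> moves the head \<open>x\<close> to position \<open>k\<close>
  of \<open>m\<close>.  The permutation determines \<open>k\<close> (the image of \<open>0\<close>), hence \<open>m\<close>, and the
  permutation of \<open>h\<close>, so the induction hypothesis applies to \<open>h\<close>.  The factorisation is
  obtained by pushing \<open>ins\<close> through the generators; the category laws are handled once and
  for all by a normal form listing the whiskered swaps a morphism is made of.\<close>

fun src :: "'c smor \<Rightarrow> 'c list" where
  "src (SId l) = l"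
| "src (SSw a b l) = a # b # l"
| "src (SCons x f) = x # src f"
| "src (SComp g f) = src f"

fun tgt :: "'c smor \<Rightarrow> 'c list" where
  "tgt (SId l) = l"
| "tgt (SSw a b l) = b # a # l"
| "tgt (SCons x f) = x # tgt f"
| "tgt (SComp g f) = tgt g"

fun well_typed :: "'c smor \<Rightarrow> bool" where
  "well_typed (SId l) = True"
| "well_typed (SSw a b l) = True"
| "well_typed (SCons x f) = well_typed f"
| "well_typed (SComp g f) = (well_typed f \<and> well_typed g \<and> tgt f = src g)"

lemma styped_iff: "styped f l l' \<longleftrightarrow> well_typed f \<and> src f = l \<and> tgt f = l'"
proof
  show "styped f l l' \<Longrightarrow> well_typed f \<and> src f = l \<and> tgt f = l'"
    by (induction rule: styped.induct) auto
  show "well_typed f \<and> src f = l \<and> tgt f = l' \<Longrightarrow> styped f l l'"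
    by (induction f arbitrary: l l') (auto intro: styped.intros)
qed

lemma slist_eq_typed:
  "slist_eq f g \<Longrightarrow> well_typed f \<and> well_typed g \<and> src f = src g \<and> tgt f = tgt g"
  by (induction rule: slist_eq.induct) (auto simp: styped_iff)

lemma slist_eq_refl: "well_typed f \<Longrightarrow> slist_eq f f"
  by (rule eq_refl) (simp add: styped_iff)

lemma slist_eq_comp:
  "slist_eq f f' \<Longrightarrow> slist_eq g g' \<Longrightarrow> tgt f = src g \<Longrightarrow> slist_eq (SComp g f) (SComp g' f')"
  by (rule eq_comp_cong) (auto simp: styped_iff dest: slist_eq_typed)

declare eq_trans [trans]

section \<open>A normal form modulo the category laws\<close>

text \<open>An atom \<open>(p, a, b, r)\<close> stands for the whiskered swap
  \<open>p ::\<^sub>m sw\<^sub>a\<^sub>,\<^sub>b\<^sub>,\<^sub>r\<close>.\<close>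

type_synonym 'c atom = "'c list \<times> 'c \<times> 'c \<times> 'c list"

fun atom_mor :: "'c atom \<Rightarrow> 'c smor" where
  "atom_mor (p, a, b, r) = foldr SCons p (SSw a b r)"

fun atom_src :: "'c atom \<Rightarrow> 'c list" where
  "atom_src (p, a, b, r) = p @ a # b # r"

fun atom_tgt :: "'c atom \<Rightarrow> 'c list" where
  "atom_tgt (p, a, b, r) = p @ b # a # r"

fun atom_cons :: "'c \<Rightarrow> 'c atom \<Rightarrow> 'c atom" where
  "atom_cons x (p, a, b, r) = (x # p, a, b, r)"

fun atoms :: "'c smor \<Rightarrow> 'c atom list" where
  "atoms (SId l) = []"
| "atoms (SSw a b l) = [([], a, b, l)]"
| "atoms (SCons x f) = map (atom_cons x) (atoms f)"
| "atoms (SComp g f) = atoms f @ atoms g"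

fun atoms_chain :: "'c list \<Rightarrow> 'c atom list \<Rightarrow> bool" where
  "atoms_chain l [] = True"
| "atoms_chain l (t # ts) = (atom_src t = l \<and> atoms_chain (atom_tgt t) ts)"

fun atoms_end :: "'c list \<Rightarrow> 'c atom list \<Rightarrow> 'c list" where
  "atoms_end l [] = l"
| "atoms_end l (t # ts) = atoms_end (atom_tgt t) ts"

fun compose_atoms :: "'c list \<Rightarrow> 'c atom list \<Rightarrow> 'c smor" where
  "compose_atoms l [] = SId l"
| "compose_atoms l (t # ts) = SComp (compose_atoms (atom_tgt t) ts) (atom_mor t)"

lemma foldr_SCons_typed [simp]:
  "well_typed (foldr SCons p f) = well_typed f"
  "src (foldr SCons p f) = p @ src f" "tgt (foldr SCons p f) = p @ tgt f"
  by (induction p) auto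

lemma atom_mor_typed [simp]:
  "well_typed (atom_mor t)" "src (atom_mor t) = atom_src t" "tgt (atom_mor t) = atom_tgt t"
  by (cases t; simp)+

lemma atom_cons_simps [simp]:
  "atom_mor (atom_cons x t) = SCons x (atom_mor t)"
  "atom_src (atom_cons x t) = x # atom_src t"
  "atom_tgt (atom_cons x t) = x # atom_tgt t"
  by (cases t; simp)+

lemma atoms_chain_append [simp]:
  "atoms_chain l (ts @ us) \<longleftrightarrow> atoms_chain l ts \<and> atoms_chain (atoms_end l ts) us"
  by (induction ts arbitrary: l) auto

lemma atoms_end_append [simp]: "atoms_end l (ts @ us) = atoms_end (atoms_end l ts) us"
  by (induction ts arbitrary: l) auto

lemma atoms_chain_map_atom_cons [simp]:
  "atoms_chain (x # l) (map (atom_cons x) ts) \<longleftrightarrow> atoms_chain l ts"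
  by (induction ts arbitrary: l) auto

lemma atoms_end_map_atom_cons [simp]:
  "atoms_end (x # l) (map (atom_cons x) ts) = x # atoms_end l ts"
  by (induction ts arbitrary: l) auto

lemma atoms_chain_Nil_iff [simp]: "atoms_chain [] ts \<longleftrightarrow> ts = []"
proof (cases ts)
  case (Cons t ts')
  then show ?thesis by (cases t) auto
qed simp

lemma atoms_chain_atoms:
  "well_typed f \<Longrightarrow> atoms_chain (src f) (atoms f) \<and> atoms_end (src f) (atoms f) = tgt f"
  by (induction f) auto

lemma compose_atoms_typed [simp]:
  assumes "atoms_chain l ts"
  shows "well_typed (compose_atoms l ts)" "src (compose_atoms l ts) = l"
    "tgt (compose_atoms l ts) = atoms_end l ts"
  using assms by (induction ts arbitrary: l) auto

lemma SCons_compose_atoms: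
  "atoms_chain l ts \<Longrightarrow>
   slist_eq (SCons x (compose_atoms l ts)) (compose_atoms (x # l) (map (atom_cons x) ts))"
proof (induction ts arbitrary: l)
  case Nil
  then show ?case by (simp add: eq_cons_id)
next
  case (Cons t ts)
  then have t_chain: "atom_src t = l" "atoms_chain (atom_tgt t) ts" by auto
  have "slist_eq (SCons x (SComp (compose_atoms (atom_tgt t) ts) (atom_mor t)))
      (SComp (SCons x (compose_atoms (atom_tgt t) ts)) (SCons x (atom_mor t)))"
    by (rule eq_cons_comp) (auto simp: styped_iff t_chain)
  also have "slist_eq \<dots>
      (SComp (compose_atoms (x # atom_tgt t) (map (atom_cons x) ts)) (SCons x (atom_mor t)))"
    by (rule slist_eq_comp) (auto simp: Cons.IH t_chain slist_eq_refl)
  finally show ?case by simp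
qed

lemma SComp_compose_atoms:
  "atoms_chain l ts \<Longrightarrow> atoms_chain (atoms_end l ts) us \<Longrightarrow>
   slist_eq (SComp (compose_atoms (atoms_end l ts) us) (compose_atoms l ts))
     (compose_atoms l (ts @ us))"
proof (induction ts arbitrary: l)
  case Nil
  then show ?case by (auto intro: eq_id_right simp: styped_iff)
next
  case (Cons t ts)
  then have t_chain: "atom_src t = l" "atoms_chain (atom_tgt t) ts"
      "atoms_chain (atoms_end (atom_tgt t) ts) us"
    by auto
  have "slist_eq (SComp (compose_atoms (atoms_end l (t # ts)) us) (compose_atoms l (t # ts)))
      (SComp (SComp (compose_atoms (atoms_end (atom_tgt t) ts) us) (compose_atoms (atom_tgt t) ts))
        (atom_mor t))"
    by (auto intro!: eq_assoc simp: styped_iff t_chain)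
  also have "slist_eq \<dots> (SComp (compose_atoms (atom_tgt t) (ts @ us)) (atom_mor t))"
    by (rule slist_eq_comp) (auto simp: Cons.IH t_chain slist_eq_refl)
  finally show ?case by simp
qed

lemma slist_eq_compose_atoms: "well_typed f \<Longrightarrow> slist_eq f (compose_atoms (src f) (atoms f))"
proof (induction f)
  case (SId l)
  then show ?case by (simp add: slist_eq_refl)
next
  case (SSw a b l)
  show ?case
    by (simp, rule eq_sym, rule eq_id_left) (simp add: styped_iff)
next
  case (SCons x f)
  then have "slist_eq (SCons x f) (SCons x (compose_atoms (src f) (atoms f)))"
    by (simp add: eq_cons_cong)
  also have "slist_eq \<dots> (compose_atoms (src (SCons x f)) (atoms (SCons x f)))"
    using SCons_compose_atoms atoms_chain_atoms SCons.prems by fastforce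
  finally show ?case .
next
  case (SComp g f)
  then have typed: "well_typed f" "well_typed g" "tgt f = src g" by auto
  then have "slist_eq (SComp g f)
      (SComp (compose_atoms (src g) (atoms g)) (compose_atoms (src f) (atoms f)))"
    using SComp.IH by (intro slist_eq_comp) auto
  also have "slist_eq \<dots> (compose_atoms (src (SComp g f)) (atoms (SComp g f)))"
    using SComp_compose_atoms atoms_chain_atoms typed by fastforce
  finally show ?case .
qed

lemma slist_eq_if_atoms_eq:
  "well_typed f \<Longrightarrow> well_typed g \<Longrightarrow> src f = src g \<Longrightarrow> atoms f = atoms g \<Longrightarrow> slist_eq f g"
  using slist_eq_compose_atoms[of f] slist_eq_compose_atoms[of g] by (metis eq_sym eq_trans)

section \<open>Moving the head of a list into place\<close>

abbreviation insert_at :: "nat \<Rightarrow> 'c \<Rightarrow> 'c list \<Rightarrow> 'c list" where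
  "insert_at k x m \<equiv> take k m @ x # drop k m"

fun ins :: "'c \<Rightarrow> 'c list \<Rightarrow> nat \<Rightarrow> 'c smor" where
  "ins x m 0 = SId (x # m)"
| "ins x [] (Suc k) = SId [x]"
| "ins x (y # m) (Suc k) = SComp (SCons y (ins x m k)) (SSw x y m)"

lemma ins_typed [simp]:
  "well_typed (ins x m k)" "src (ins x m k) = x # m" "tgt (ins x m k) = insert_at k x m"
  by (induction x m k rule: ins.induct) auto

definition slides_past_ins :: "'c \<Rightarrow> 'c list \<Rightarrow> nat \<Rightarrow> 'c smor \<Rightarrow> bool" where
  "slides_past_ins x m k g \<longleftrightarrow> (\<exists>k' h. k' \<le> length (tgt h) \<and> well_typed h \<and> src h = m \<and>
     slist_eq (SComp g (ins x m k)) (SComp (ins x (tgt h) k') (SCons x h)))"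

lemma slides_past_insI:
  "slist_eq (SComp g (ins x m k)) (SComp (ins x (tgt h) k') (SCons x h)) \<Longrightarrow>
   k' \<le> length (tgt h) \<Longrightarrow> well_typed h \<Longrightarrow> src h = m \<Longrightarrow> slides_past_ins x m k g"
  unfolding slides_past_ins_def by blast

lemma id_slides_past_ins: "k \<le> length m \<Longrightarrow> slides_past_ins x m k (SId (insert_at k x m))"
  by (rule slides_past_insI[where h = "SId m" and k' = k]) (auto intro: slist_eq_if_atoms_eq)

lemma sw_slides_past_ins_0: "slides_past_ins a (b # l) 0 (SSw a b l)"
  by (rule slides_past_insI[where h = "SId (b # l)" and k' = 1]) (auto intro: slist_eq_if_atoms_eq)

lemma sw_slides_past_ins_1: "slides_past_ins b (a # l) 1 (SSw a b l)"
proof (rule slides_past_insI[where h = "SId (a # l)" and k' = 0])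
  have "slist_eq (SComp (SSw a b l) (ins b (a # l) 1)) (SComp (SSw a b l) (SSw b a l))"
    by (auto intro: slist_eq_if_atoms_eq)
  also have "slist_eq \<dots> (SId (b # a # l))"
    by (rule eq_sw_inv)
  also have "slist_eq \<dots> (SComp (ins b (tgt (SId (a # l))) 0) (SCons b (SId (a # l))))"
    by (auto intro: slist_eq_if_atoms_eq)
  finally show "slist_eq (SComp (SSw a b l) (ins b (a # l) 1))
      (SComp (ins b (tgt (SId (a # l))) 0) (SCons b (SId (a # l))))" .
qed auto

text \<open>The Yang--Baxter relation lets \<open>x\<close> pass the swap of \<open>a\<close> and \<open>b\<close>, naturality
  lets the swap pass the rest of the insertion.\<close>

lemma sw_slides_past_ins_Suc_Suc:
  assumes "k \<le> length m"
  shows "slides_past_ins x (a # b # m) (Suc (Suc k)) (SSw a b (insert_at k x m))"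
proof (rule slides_past_insI[where h = "SSw a b m" and k' = "Suc (Suc k)"])
  define I where "I = ins x m k"
  have I: "well_typed I" "src I = x # m" "tgt I = insert_at k x m"
    by (simp_all add: I_def)
  have "slist_eq (SComp (SSw a b (insert_at k x m)) (ins x (a # b # m) (Suc (Suc k))))
      (SComp (SComp (SSw a b (tgt I)) (SCons a (SCons b I)))
        (SComp (SCons a (SSw x b m)) (SSw x a (b # m))))"
    using I by (auto simp: I_def intro: slist_eq_if_atoms_eq)
  also have "slist_eq \<dots> (SComp (SComp (SCons b (SCons a I)) (SSw a b (x # m)))
        (SComp (SCons a (SSw x b m)) (SSw x a (b # m))))"
    using I by (intro slist_eq_comp slist_eq_refl eq_sw_nat) (auto simp: styped_iff)
  also have "slist_eq \<dots> (SComp (SCons b (SCons a I))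
        (SComp (SSw a b (x # m)) (SComp (SCons a (SSw x b m)) (SSw x a (b # m)))))"
    using I by (auto intro: slist_eq_if_atoms_eq)
  also have "slist_eq \<dots> (SComp (SCons b (SCons a I))
        (SComp (SCons b (SSw x a m)) (SComp (SSw x b (a # m)) (SCons x (SSw a b m)))))"
    using I by (intro slist_eq_comp slist_eq_refl eq_yb) auto
  also have "slist_eq \<dots> (SComp (ins x (tgt (SSw a b m)) (Suc (Suc k))) (SCons x (SSw a b m)))"
    using I by (auto simp: I_def intro: slist_eq_if_atoms_eq)
  finally show "slist_eq (SComp (SSw a b (insert_at k x m)) (ins x (a # b # m) (Suc (Suc k))))
      (SComp (ins x (tgt (SSw a b m)) (Suc (Suc k))) (SCons x (SSw a b m)))" .
qed (simp_all add: assms)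

lemma cons_slides_past_ins_0: "well_typed g \<Longrightarrow> slides_past_ins x (src g) 0 (SCons x g)"
  by (rule slides_past_insI[where h = g and k' = 0]) (auto intro: slist_eq_if_atoms_eq)

lemma cons_slides_past_ins_Suc:
  assumes "slides_past_ins x m k g" and "well_typed g" and "src g = insert_at k x m"
  shows "slides_past_ins x (y # m) (Suc k) (SCons y g)"
proof -
  obtain k' h where h: "k' \<le> length (tgt h)" "well_typed h" "src h = m"
    and slide: "slist_eq (SComp g (ins x m k)) (SComp (ins x (tgt h) k') (SCons x h))"
    using assms(1) unfolding slides_past_ins_def by blast
  have "slist_eq (SComp (SCons y g) (ins x (y # m) (Suc k)))
      (SComp (SCons y (SComp g (ins x m k))) (SSw x y m))"
    using assms by (auto intro: slist_eq_if_atoms_eq)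
  also have "slist_eq \<dots> (SComp (SCons y (SComp (ins x (tgt h) k') (SCons x h))) (SSw x y m))"
    using assms by (intro slist_eq_comp[OF _ eq_cons_cong[OF slide]] slist_eq_refl) auto
  also have "slist_eq \<dots>
      (SComp (SCons y (ins x (tgt h) k')) (SComp (SCons y (SCons x h)) (SSw x y m)))"
    using h by (auto intro: slist_eq_if_atoms_eq)
  also have "slist_eq \<dots>
      (SComp (SCons y (ins x (tgt h) k')) (SComp (SSw x y (tgt h)) (SCons x (SCons y h))))"
    using h by (intro slist_eq_comp[OF eq_sym[OF eq_sw_nat]] slist_eq_refl) (auto simp: styped_iff)
  also have "slist_eq \<dots> (SComp (ins x (tgt (SCons y h)) (Suc k')) (SCons x (SCons y h)))"
    using h by (auto intro: slist_eq_if_atoms_eq)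
  finally show ?thesis
    by (rule slides_past_insI) (use h in auto)
qed

lemma comp_slides_past_ins:
  assumes "slides_past_ins x m k g1" and "well_typed g1" and "src g1 = insert_at k x m"
    and "tgt g1 = src g2"
    and IH2: "\<And>m' k'. k' \<le> length m' \<Longrightarrow> src g2 = insert_at k' x m' \<Longrightarrow>
      slides_past_ins x m' k' g2"
  shows "slides_past_ins x m k (SComp g2 g1)"
proof -
  obtain k1 h1 where h1: "k1 \<le> length (tgt h1)" "well_typed h1" "src h1 = m"
    and slide1: "slist_eq (SComp g1 (ins x m k)) (SComp (ins x (tgt h1) k1) (SCons x h1))"
    using assms(1) unfolding slides_past_ins_def by blast
  have "src g2 = insert_at k1 x (tgt h1)"
    using slist_eq_typed[OF slide1] assms(4) by simp
  then obtain k2 h2 where h2: "k2 \<le> length (tgt h2)" "well_typed h2" "src h2 = tgt h1"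
    and slide2:
      "slist_eq (SComp g2 (ins x (tgt h1) k1)) (SComp (ins x (tgt h2) k2) (SCons x h2))"
    using IH2[OF h1(1)] unfolding slides_past_ins_def by blast
  have g2: "well_typed g2"
    using slist_eq_typed[OF slide2] by simp
  have "slist_eq (SComp (SComp g2 g1) (ins x m k)) (SComp g2 (SComp g1 (ins x m k)))"
    using assms g2 by (auto intro: slist_eq_if_atoms_eq)
  also have "slist_eq \<dots> (SComp g2 (SComp (ins x (tgt h1) k1) (SCons x h1)))"
    using assms g2 by (intro slist_eq_comp slide1 slist_eq_refl) auto
  also have "slist_eq \<dots> (SComp (SComp g2 (ins x (tgt h1) k1)) (SCons x h1))"
    using h1 g2 \<open>src g2 = _\<close> by (auto intro: slist_eq_if_atoms_eq)
  also have "slist_eq \<dots> (SComp (SComp (ins x (tgt h2) k2) (SCons x h2)) (SCons x h1))"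
    using h1 by (intro slist_eq_comp slide2 slist_eq_refl) auto
  also have "slist_eq \<dots>
      (SComp (ins x (tgt (SComp h2 h1)) k2) (SCons x (SComp h2 h1)))"
    using h1 h2 by (auto intro: slist_eq_if_atoms_eq)
  finally show ?thesis
    by (rule slides_past_insI) (use h1 h2 in auto)
qed

lemma well_typed_slides_past_ins:
  "well_typed g \<Longrightarrow> src g = insert_at k x m \<Longrightarrow> k \<le> length m \<Longrightarrow> slides_past_ins x m k g"
proof (induction g arbitrary: k m)
  case (SId l)
  then show ?case by (simp add: id_slides_past_ins)
next
  case (SSw a b l)
  consider "k = 0" | "k = 1" | i where "k = Suc (Suc i)"
    by (metis One_nat_def not0_implies_Suc)
  then show ?case
  proof cases
    case 1
    with SSw show ?thesis by (auto simp: sw_slides_past_ins_0)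
  next
    case 2
    with SSw show ?thesis by (cases m) (auto simp: sw_slides_past_ins_1[simplified])
  next
    case 3
    with SSw obtain m0 where "m = a # b # m0" "l = insert_at i x m0" "i \<le> length m0"
      by (cases m; cases "tl m") auto
    with 3 show ?thesis by (simp add: sw_slides_past_ins_Suc_Suc)
  qed
next
  case (SCons y g)
  show ?case
  proof (cases k)
    case 0
    with SCons show ?thesis by (auto simp: cons_slides_past_ins_0)
  next
    case (Suc j)
    with SCons obtain m1 where "m = y # m1" "src g = insert_at j x m1" "j \<le> length m1"
      by (cases m) auto
    with Suc SCons show ?thesis by (simp add: cons_slides_past_ins_Suc)
  qed
next
  case (SComp g2 g1)
  then show ?case by (intro comp_slides_past_ins) auto
qed

section \<open>Soundness of the weight\<close>

declare cox_trans [trans]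

lemma cox_eq_append: "cox_eq u u' \<Longrightarrow> cox_eq v v' \<Longrightarrow> cox_eq (u @ v) (u' @ v')"
  using cox_ctx[of u u' "[]" v] cox_ctx[of v v' u' "[]"] by (metis append_Nil append_Nil2 cox_trans)

lemma cox_eq_map_Suc: "cox_eq u v \<Longrightarrow> cox_eq (map Suc u) (map Suc v)"
proof (induction rule: cox_eq.induct)
  case (cox_ctx u v p q)
  then show ?case using cox_eq.cox_ctx by fastforce
next
  case (cox_comm i j)
  then show ?case using cox_eq.cox_comm[of "Suc i" "Suc j"] by simp
next
  case (cox_comm' j i)
  then show ?case using cox_eq.cox_comm'[of "Suc j" "Suc i"] by simp
qed (auto intro: cox_eq.intros)

lemma cox_eq_rev_append_self: "cox_eq (rev v @ v) []"
proof (induction v)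
  case Nil
  then show ?case by (simp add: cox_refl)
next
  case (Cons i v)
  have "cox_eq (rev v @ [i, i] @ v) (rev v @ [] @ v)"
    by (rule cox_ctx[OF cox_sq])
  then show ?case using Cons cox_trans by fastforce
qed

lemma cox_eq_if_append_rev: "cox_eq (u @ rev v) [] \<Longrightarrow> cox_eq u v"
proof -
  assume "cox_eq (u @ rev v) []"
  have "cox_eq u (u @ rev v @ v)"
    using cox_ctx[OF cox_eq_rev_append_self[of v], of u "[]"] by (simp add: cox_sym)
  also have "cox_eq \<dots> v"
    using cox_ctx[OF \<open>cox_eq (u @ rev v) []\<close>, of "[]" v] by simp
  finally show ?thesis .
qed

lemma cox_eq_0_commute: "\<forall>j\<in>set w. 2 \<le> j \<Longrightarrow> cox_eq (w @ [0]) (0 # w)"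
proof (induction w)
  case Nil
  then show ?case by (simp add: cox_refl)
next
  case (Cons j w)
  have "cox_eq ([j, 0] @ rev [0, j]) []"
    using Cons.prems by (simp add: cox_comm')
  then have "cox_eq [j, 0] [0, j]"
    by (rule cox_eq_if_append_rev)
  have "cox_eq ((j # w) @ [0]) ([j] @ (0 # w) @ [])"
    using cox_ctx[OF Cons.IH, of "[j]" "[]"] Cons.prems by simp
  also have "cox_eq \<dots> ([] @ [0, j] @ w)"
    using cox_ctx[OF \<open>cox_eq [j, 0] [0, j]\<close>, of "[]" w] by simp
  finally show ?case by simp
qed

lemma weight_sound: "slist_eq f g \<Longrightarrow> cox_eq (weight f) (weight g)"
proof (induction rule: slist_eq.induct)
  case (eq_sw_nat f l l' a b)
  show ?case using cox_eq_0_commute[of "map Suc (map Suc (weight f))"] by auto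
next
  case (eq_sw_inv b a l)
  show ?case using cox_sq[of 0] by simp
next
  case (eq_yb b c a l)
  show ?case by (simp, rule cox_eq_if_append_rev) (simp add: cox_braid[of 0, simplified])
qed (auto intro: cox_eq.intros cox_eq_append cox_eq_map_Suc)

section \<open>Position permutations\<close>

text \<open>\<open>word_perm (weight f)\<close> sends a position in \<open>src f\<close> to the position of the same
  entry in \<open>tgt f\<close>.\<close>

fun word_perm :: "nat list \<Rightarrow> nat \<Rightarrow> nat" where
  "word_perm [] = id"
| "word_perm (i # w) = word_perm w \<circ> transpose i (Suc i)"

definition lift_perm :: "(nat \<Rightarrow> nat) \<Rightarrow> nat \<Rightarrow> nat" where
  "lift_perm p = case_nat 0 (Suc \<circ> p)"

lemma word_perm_append: "word_perm (u @ v) = word_perm v \<circ> word_perm u"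
  by (induction u) auto

lemma word_perm_map_Suc: "word_perm (map Suc w) = lift_perm (word_perm w)"
  by (induction w) (auto simp: lift_perm_def fun_eq_iff transpose_def split: nat.split)

lemma word_perm_cong: "cox_eq u v \<Longrightarrow> word_perm u = word_perm v"
  by (induction rule: cox_eq.induct) (auto simp: word_perm_append fun_eq_iff transpose_def)

lemma bij_word_perm: "bij (word_perm w)"
  by (induction w) (simp_all only: word_perm.simps bij_id bij_comp bij_transpose)

lemma word_perm_ins_0: "k \<le> length m \<Longrightarrow> word_perm (weight (ins x m k)) 0 = k"
  by (induction x m k rule: ins.induct)
    (auto simp: word_perm_append word_perm_map_Suc lift_perm_def)

lemma factor_through_ins:
  assumes "well_typed f" and "src f = x # l"
  obtains k h where "k \<le> length (tgt h)" "well_typed h" "src h = l"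
    "slist_eq f (SComp (ins x (tgt h) k) (SCons x h))"
proof -
  have "slides_past_ins x l 0 f"
    using assms by (intro well_typed_slides_past_ins) auto
  then obtain k h where h: "k \<le> length (tgt h)" "well_typed h" "src h = l"
    and slide: "slist_eq (SComp f (ins x l 0)) (SComp (ins x (tgt h) k) (SCons x h))"
    unfolding slides_past_ins_def by blast
  have "slist_eq f (SComp f (ins x l 0))"
    using assms by (auto intro: slist_eq_if_atoms_eq)
  with slide h that show ?thesis
    using eq_trans by blast
qed

lemma insert_at_eq_iff:
  assumes "k \<le> length m" and "k \<le> length m'"
  shows "insert_at k x m = insert_at k x m' \<longleftrightarrow> m = m'"
proof
  assume "insert_at k x m = insert_at k x m'"
  with assms have "take k m = take k m' \<and> drop k m = drop k m'"
    by (subst (asm) append_eq_append_conv) auto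
  then show "m = m'"
    by (metis append_take_drop_id)
qed simp

lemma ins_lift_perm_cancel:
  assumes "k \<le> length m" and "k' \<le> length m'" and "insert_at k x m = insert_at k' x m'"
    and perm_eq: "word_perm (weight (ins x m k)) \<circ> lift_perm p
      = word_perm (weight (ins x m' k')) \<circ> lift_perm p'"
  shows "k = k' \<and> m = m' \<and> p = p'"
proof -
  have "k = k'"
    using fun_cong[OF perm_eq, of 0] assms(1,2) by (simp add: word_perm_ins_0 lift_perm_def)
  with assms(1-3) have "m = m'"
    by (metis insert_at_eq_iff)
  have "lift_perm p = lift_perm p'"
  proof
    fix q
    show "lift_perm p q = lift_perm p' q"
      using fun_cong[OF perm_eq, of q] bij_is_inj[OF bij_word_perm] \<open>k = k'\<close> \<open>m = m'\<close>
      by (simp add: inj_eq)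
  qed
  have "p = p'"
  proof
    fix q
    show "p q = p' q"
      using fun_cong[OF \<open>lift_perm p = lift_perm p'\<close>, of "Suc q"] by (simp add: lift_perm_def)
  qed
  with \<open>k = k'\<close> \<open>m = m'\<close> show ?thesis by blast
qed

lemma slist_eq_if_word_perm_eq:
  "well_typed f \<Longrightarrow> well_typed g \<Longrightarrow> src f = src g \<Longrightarrow> tgt f = tgt g \<Longrightarrow>
   word_perm (weight f) = word_perm (weight g) \<Longrightarrow> slist_eq f g"
proof (induction "src f" arbitrary: f g)
  case Nil
  then have "atoms f = []" "atoms g = []"
    using atoms_chain_atoms[of f] atoms_chain_atoms[of g] by simp_all
  with Nil show ?case
    by (auto intro: slist_eq_if_atoms_eq)
next
  case (Cons x l)
  obtain k h where h: "k \<le> length (tgt h)" "well_typed h" "src h = l"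
    and f_eq: "slist_eq f (SComp (ins x (tgt h) k) (SCons x h))"
    using factor_through_ins[of f x l] Cons by metis
  obtain k' h' where h': "k' \<le> length (tgt h')" "well_typed h'" "src h' = l"
    and g_eq: "slist_eq g (SComp (ins x (tgt h') k') (SCons x h'))"
    using factor_through_ins[of g x l] Cons by metis
  have "insert_at k x (tgt h) = insert_at k' x (tgt h')"
    using slist_eq_typed[OF f_eq] slist_eq_typed[OF g_eq] Cons.prems by simp
  moreover have "word_perm (weight (ins x (tgt h) k)) \<circ> lift_perm (word_perm (weight h))
      = word_perm (weight (ins x (tgt h') k')) \<circ> lift_perm (word_perm (weight h'))"
    using word_perm_cong[OF weight_sound[OF f_eq]] word_perm_cong[OF weight_sound[OF g_eq]]
      Cons.prems by (simp add: word_perm_append word_perm_map_Suc)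
  ultimately have "k = k'" "tgt h = tgt h'" "word_perm (weight h) = word_perm (weight h')"
    using ins_lift_perm_cancel[OF h(1) h'(1)] by simp_all
  with h h' have "slist_eq h h'"
    by (intro Cons.hyps) auto
  then have "slist_eq (SComp (ins x (tgt h) k) (SCons x h))
      (SComp (ins x (tgt h') k') (SCons x h'))"
    using \<open>k = k'\<close> \<open>tgt h = tgt h'\<close>
    by (intro slist_eq_comp[OF eq_cons_cong]) (simp_all add: slist_eq_refl)
  then show ?case
    using eq_trans[OF f_eq] eq_trans[OF _ eq_sym[OF g_eq]] by blast
qed

theorem theorem2p8:
  fixes f g :: "'c smor" and L L' :: "'c list"
  assumes "styped f L L'" and "styped g L L'"
  shows "slist_eq f g \<longleftrightarrow> cox_eq (weight f) (weight g)"
proof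
  assume "slist_eq f g"
  then show "cox_eq (weight f) (weight g)"
    by (rule weight_sound)
next
  assume "cox_eq (weight f) (weight g)"
  then have "word_perm (weight f) = word_perm (weight g)"
    by (rule word_perm_cong)
  with assms show "slist_eq f g"
    by (intro slist_eq_if_word_perm_eq) (auto simp: styped_iff)
qed

end
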